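(* Let $\Omega$ be a finite set, let $\mathcal K$ be a finite nonempty set of gambles on $\Omega$, and let $\underline{P}_{\mathcal K}$ be a coherent lower prevision on $\mathcal K$. Let $\mathcal M=\{P: P(f)\ge\underline{P}_{\mathcal K}(f)\ \forall f\in\mathcal K\}$ be its credal set, $\operatorname{ext}(\mathcal M)$ its set of extreme points, and $\underline{E}(h)=\min_{P\in\mathcal M}P(h)$ its natural extension. For $f\in\mathcal K$ let $\mathcal M_f=\{P\in\mathcal M: P(f)=\underline{E}(f)\}$ and let $\mathcal E_f$ be the set of extreme points of $\mathcal M_f$. For $E\in\mathcal M$ let $N_{\mathcal M}(E)=\{h: E(h)=\underline{E}(h)\}$, and for linear previsions $E\in\mathcal M$, $F$ define $$d_E(E,F)=\max_{h\in N_{\mathcal M}(E),\,h\neq 0}\frac{F(h)-E(h)}{\|h\|}.$$ Let $\underline{P}$ be any coherent lower prevision on the set of all gambles with $\underline{P}(f)=\underline{P}_{\mathcal K}(f)$ for all $f\in\mathcal K$. Then $$d(\underline{P},\underline{E}):=\max_{\|h\|=1}|\underline{P}(h)-\underline{E}(h)|\le\max_{E\in\operatorname{ext}(\mathcal M)}\ \min_{f\in\mathcal K}\ \max_{F\in\mathcal E_f}d_E(E,F).$$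
   Context: Gambles are real-valued functions on the finite set $\Omega$, identified with vectors in $\mathbb{R}^{\Omega}$, with Euclidean norm $\|h\|=\sqrt{\sum_{x}h(x)^2}$. A linear prevision is the expectation functional $P(f)=\sum_{x}p(x)f(x)$ of a probability mass vector $p$. A lower prevision $\underline{P}$ on a set of gambles $\mathcal H$ is coherent if there is a nonempty closed convex set $\mathcal C$ of linear previsions with $\underline{P}(f)=\min_{P\in\mathcal C}P(f)$ for all $f\in\mathcal H$. Since $\mathcal K$ is finite, $\mathcal M$ is a convex polytope. *)

theory Defs
  imports "HOL-Analysis.Analysis"
begin

text \<open>Omega is a finite type 'n; gambles are vectors in real^'n with Euclidean norm.
  A linear prevision is given by its probability mass vector p; P(f) = p \<bullet> f.\<close>

definition lin_prev :: "real^'n \<Rightarrow> bool" where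
  "lin_prev p \<longleftrightarrow> (\<forall>x. 0 \<le> p $ x) \<and> (\<Sum>x\<in>UNIV. p $ x) = 1"

definition prev :: "real^'n \<Rightarrow> real^'n \<Rightarrow> real" where
  "prev p f = (\<Sum>x\<in>UNIV. p $ x * f $ x)"

definition coherent_on :: "(real^'n) set \<Rightarrow> (real^'n \<Rightarrow> real) \<Rightarrow> bool" where
  "coherent_on H LP \<longleftrightarrow> (\<exists>C. C \<noteq> {} \<and> closed C \<and> convex C \<and> (\<forall>p\<in>C. lin_prev p) \<and>
     (\<forall>f\<in>H. (\<exists>p\<in>C. prev p f = LP f) \<and> (\<forall>p\<in>C. LP f \<le> prev p f)))"

definition credal :: "(real^'n) set \<Rightarrow> (real^'n \<Rightarrow> real) \<Rightarrow> (real^'n) set" where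
  "credal K LP = {p. lin_prev p \<and> (\<forall>f\<in>K. LP f \<le> prev p f)}"

text \<open>Natural extension: lower envelope (a minimum, since M is compact).\<close>
definition natext :: "(real^'n) set \<Rightarrow> real^'n \<Rightarrow> real" where
  "natext M h = (INF p\<in>M. prev p h)"

definition face_at :: "(real^'n) set \<Rightarrow> real^'n \<Rightarrow> (real^'n) set" where
  "face_at M f = {p\<in>M. prev p f = natext M f}"

definition normal_set :: "(real^'n) set \<Rightarrow> real^'n \<Rightarrow> (real^'n) set" where
  "normal_set M e = {h. prev e h = natext M h}"

definition dE :: "(real^'n) set \<Rightarrow> real^'n \<Rightarrow> real^'n \<Rightarrow> real" where
  "dE M e F = (SUP h\<in>normal_set M e - {0}. (prev F h - prev e h) / norm h)"

definition dist_lp :: "(real^'n \<Rightarrow> real) \<Rightarrow> (real^'n \<Rightarrow> real) \<Rightarrow> real" where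
  "dist_lp P Q = (SUP h\<in>{h. norm h = 1}. \<bar>P h - Q h\<bar>)"

end

theory Submission
  imports Defs
begin

text \<open>The credal set of \<open>LP\<close> lies inside \<open>M\<close>, so \<open>LP \<ge> natext M\<close>. Fix a unit gamble \<open>h\<close>
  and an extreme point \<open>E\<close> of \<open>M\<close> minimising \<open>h\<close>; then \<open>h \<in> N\<^sub>M(E)\<close>. For \<open>f \<in> K\<close>, a
  dominating prevision \<open>P\<close> of \<open>LP\<close> that attains \<open>LP f = LPK f\<close> lies in \<open>M\<^sub>f\<close>, and an extreme
  point \<open>F\<close> of \<open>M\<^sub>f\<close> maximising \<open>h\<close> gives \<open>LP h - E h \<le> P h - E h \<le> F h - E h \<le> d\<^sub>E(E, F)\<close>.
  Both extreme points exist by the Krein--Milman theorem, as \<open>M\<close> and \<open>M\<^sub>f\<close> are polytopes.\<close>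

lemma prev_eq_inner: "prev p f = p \<bullet> f"
  by (simp add: prev_def inner_vec_def)

lemma lin_prev_abs_prev_le_norm:
  assumes "lin_prev p" shows "\<bar>prev p h\<bar> \<le> norm h"
proof -
  have "\<bar>prev p h\<bar> \<le> (\<Sum>x\<in>UNIV. \<bar>p $ x * h $ x\<bar>)"
    unfolding prev_def by (rule sum_abs)
  also have "\<dots> \<le> (\<Sum>x\<in>UNIV. p $ x * norm h)"
    using assms unfolding lin_prev_def
    by (intro sum_mono) (simp add: abs_mult mult_left_mono component_le_norm_cart)
  also have "\<dots> = norm h"
    using assms unfolding lin_prev_def by (simp add: sum_distrib_right[symmetric])
  finally show ?thesis .
qed

lemma lin_prev_prev_one: "lin_prev p \<Longrightarrow> prev p 1 = 1"
  by (simp add: prev_def lin_prev_def)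

lemma extreme_point_inner_ge:
  fixes S :: "'a::euclidean_space set"
  assumes "compact S" "convex S" "p \<in> S"
  obtains x where "x extreme_point_of S" "p \<bullet> h \<le> x \<bullet> h"
proof -
  have "p \<in> convex hull {x. x extreme_point_of S}"
    using Krein_Milman_Minkowski[OF assms(1,2)] assms(3) by simp
  moreover have "convex {x. x \<bullet> h < p \<bullet> h}"
    using convex_halfspace_lt[of h "p \<bullet> h"] by (simp add: inner_commute)
  ultimately have "\<not> {x. x extreme_point_of S} \<subseteq> {x. x \<bullet> h < p \<bullet> h}"
    using hull_minimal by fastforce
  with that show thesis by force
qed

lemma extreme_point_inner_le:
  fixes S :: "'a::euclidean_space set"
  assumes "compact S" "convex S" "p \<in> S"
  obtains x where "x extreme_point_of S" "x \<bullet> h \<le> p \<bullet> h"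
  using extreme_point_inner_ge[OF assms, of "-h"] by auto

lemma compact_credal: "compact (credal K LP)"
proof -
  have "credal K LP = (\<Inter>x. {p. 0 \<le> p $ x}) \<inter> {p. (\<Sum>x\<in>UNIV. p $ x) = 1}
      \<inter> (\<Inter>f\<in>K. {p. LP f \<le> p \<bullet> f})"
    by (auto simp: credal_def lin_prev_def prev_eq_inner)
  then have "closed (credal K LP)"
    by (auto intro!: closed_Int closed_INT closed_Collect_le closed_Collect_eq continuous_intros)
  moreover have "bounded (credal K LP)"
    unfolding bounded_iff
  proof (intro exI ballI)
    fix p assume "p \<in> credal K LP"
    then have "(\<Sum>x\<in>UNIV. \<bar>p $ x\<bar>) = 1"
      by (simp add: credal_def lin_prev_def)
    with norm_le_l1_cart[of p] show "norm p \<le> 1" by simp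
  qed
  ultimately show ?thesis by (simp add: compact_eq_bounded_closed)
qed

lemma convex_credal: "convex (credal K LP)"
  unfolding convex_def
proof (intro ballI allI impI)
  fix p q and u v :: real
  assume p: "p \<in> credal K LP" and q: "q \<in> credal K LP"
    and uv: "0 \<le> u" "0 \<le> v" "u + v = 1"
  have "lin_prev (u *\<^sub>R p + v *\<^sub>R q)"
    using p q uv unfolding credal_def lin_prev_def
    by (auto simp: sum.distrib sum_distrib_left[symmetric])
  moreover have "LP f \<le> prev (u *\<^sub>R p + v *\<^sub>R q) f" if "f \<in> K" for f
  proof -
    have "LP f = u * LP f + v * LP f" using uv by (metis distrib_right mult_1)
    also have "\<dots> \<le> u * prev p f + v * prev q f"
      using p q that uv unfolding credal_def by (auto intro!: add_mono mult_left_mono)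
    finally show ?thesis by (simp add: prev_eq_inner inner_add_left)
  qed
  ultimately show "u *\<^sub>R p + v *\<^sub>R q \<in> credal K LP" by (simp add: credal_def)
qed

lemma natext_le:
  assumes "compact M" "p \<in> M"
  shows "natext M h \<le> prev p h"
proof -
  have "compact ((\<lambda>p. prev p h) ` M)"
    unfolding prev_eq_inner by (intro compact_continuous_image assms(1) continuous_intros)
  then have "bdd_below ((\<lambda>p. prev p h) ` M)"
    by (intro bounded_imp_bdd_below compact_imp_bounded)
  then show ?thesis unfolding natext_def by (rule cINF_lower[OF _ assms(2)])
qed

lemma natext_attained:
  assumes "compact M" "M \<noteq> {}"
  obtains p where "p \<in> M" "prev p h = natext M h"
proof -
  have "continuous_on M (\<lambda>p. prev p h)"
    unfolding prev_eq_inner by (intro continuous_intros)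
  from continuous_attains_inf[OF assms this]
  obtain p where p: "p \<in> M" "\<And>q. q \<in> M \<Longrightarrow> prev p h \<le> prev q h" by blast
  have "prev p h \<le> natext M h"
    unfolding natext_def by (rule cINF_greatest[OF assms(2)]) (use p in auto)
  with natext_le[OF assms(1) p(1), of h] p(1) that show thesis by simp
qed

lemma extreme_point_attains_natext:
  assumes "compact M" "convex M" "M \<noteq> {}"
  obtains E where "E extreme_point_of M" "prev E h = natext M h"
proof -
  obtain p where p: "p \<in> M" "prev p h = natext M h"
    using natext_attained[OF assms(1,3)] .
  then obtain E where E: "E extreme_point_of M" "E \<bullet> h \<le> p \<bullet> h"
    using extreme_point_inner_le[OF assms(1,2)] by blast
  then have "natext M h \<le> prev E h"
    by (intro natext_le[OF assms(1)]) (simp add: extreme_point_of_def)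
  with E p that show thesis by (simp add: prev_eq_inner)
qed

lemma face_at_eq_Int_hyperplane: "face_at M f = M \<inter> {p. f \<bullet> p = natext M f}"
  by (auto simp: face_at_def prev_eq_inner inner_commute)

lemma compact_face_at: "compact M \<Longrightarrow> compact (face_at M f)"
  unfolding face_at_eq_Int_hyperplane
  by (intro compact_Int_closed closed_hyperplane)

lemma convex_face_at: "convex M \<Longrightarrow> convex (face_at M f)"
  unfolding face_at_eq_Int_hyperplane by (intro convex_Int convex_hyperplane)

lemma face_at_has_extreme_point:
  assumes "compact M" "convex M" "M \<noteq> {}"
  shows "{F. F extreme_point_of face_at M f} \<noteq> {}"
proof -
  obtain p where "p \<in> M" "prev p f = natext M f"
    using natext_attained[OF assms(1,3)] .
  then have "face_at M f \<noteq> {}" by (auto simp: face_at_def)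
  with extreme_point_exists_convex[OF compact_face_at[OF assms(1)] convex_face_at[OF assms(2)]]
  show ?thesis by blast
qed

lemma one_in_normal_set:
  assumes "M \<noteq> {}" "\<forall>p\<in>M. lin_prev p" "lin_prev e"
  shows "1 \<in> normal_set M e - {0}"
proof -
  have "natext M 1 = (INF p\<in>M. 1)"
    unfolding natext_def using assms(2) by (intro INF_cong) (simp_all add: lin_prev_prev_one)
  then show ?thesis
    using assms(1) lin_prev_prev_one[OF assms(3)] by (simp add: normal_set_def)
qed

lemma prev_diff_div_norm_le_2:
  assumes "lin_prev e" "lin_prev F"
  shows "(prev F h - prev e h) / norm h \<le> 2"
proof (cases "h = 0")
  case False
  have "prev F h - prev e h \<le> 2 * norm h"
    using lin_prev_abs_prev_le_norm[OF assms(1), of h] lin_prev_abs_prev_le_norm[OF assms(2), of h]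
    by linarith
  then show ?thesis using False by (simp add: divide_le_eq)
qed simp

lemma dE_ge:
  assumes "lin_prev e" "lin_prev F" "h \<in> normal_set M e" "h \<noteq> 0"
  shows "(prev F h - prev e h) / norm h \<le> dE M e F"
  unfolding dE_def
  by (rule cSUP_upper) (use assms prev_diff_div_norm_le_2 in \<open>auto intro!: bdd_aboveI2\<close>)

text \<open>A nonempty normal cone is needed here: \<open>Sup {}\<close> is an unspecified real.\<close>
lemma dE_le_2:
  assumes "lin_prev e" "lin_prev F" "normal_set M e - {0} \<noteq> {}"
  shows "dE M e F \<le> 2"
  unfolding dE_def
  by (rule cSUP_least) (use assms prev_diff_div_norm_le_2 in auto)

lemma dE_extreme_face_bounded:
  assumes "compact M" "convex M" "M \<noteq> {}" "\<forall>p\<in>M. lin_prev p" "lin_prev e"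
  shows "bdd_above ((dE M e) ` {F. F extreme_point_of face_at M f})"
    and "(SUP F\<in>{F. F extreme_point_of face_at M f}. dE M e F) \<le> 2"
proof -
  have "dE M e F \<le> 2" if "F extreme_point_of face_at M f" for F
    using that assms one_in_normal_set[OF assms(3-5)]
    by (intro dE_le_2) (auto simp: extreme_point_of_def face_at_def)
  then show "bdd_above ((dE M e) ` {F. F extreme_point_of face_at M f})"
    and "(SUP F\<in>{F. F extreme_point_of face_at M f}. dE M e F) \<le> 2"
    using face_at_has_extreme_point[OF assms(1-3)] by (auto intro!: bdd_aboveI2 cSUP_least)
qed

lemma INF_SUP_dE_extreme_face_le_2:
  assumes "finite K" "K \<noteq> {}"
    and "compact M" "convex M" "M \<noteq> {}" "\<forall>p\<in>M. lin_prev p" "lin_prev e"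
  shows "(INF f\<in>K. SUP F\<in>{F. F extreme_point_of face_at M f}. dE M e F) \<le> 2"
proof -
  obtain f where "f \<in> K" using assms(2) by blast
  then show ?thesis
    using cINF_lower[OF bdd_below_finite[OF finite_imageI[OF assms(1)]]]
      dE_extreme_face_bounded(2)[OF assms(3-7)] by (meson order.trans)
qed

lemma lower_prevision_gap_le_dE:
  assumes "compact M" "convex M" "\<forall>p\<in>M. lin_prev p" "K \<noteq> {}" "norm h = 1"
    and "E extreme_point_of M" "prev E h = natext M h"
    and dominated: "\<And>f. f \<in> K \<Longrightarrow> \<exists>P\<in>face_at M f. LP h \<le> prev P h"
  shows "LP h - natext M h \<le> (INF f\<in>K. SUP F\<in>{F. F extreme_point_of face_at M f}. dE M E F)"
proof (rule cINF_greatest[OF assms(4)])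
  fix f assume "f \<in> K"
  then obtain P where P: "P \<in> face_at M f" "LP h \<le> prev P h" using dominated by blast
  obtain F where F: "F extreme_point_of face_at M f" "P \<bullet> h \<le> F \<bullet> h"
    using extreme_point_inner_ge[OF compact_face_at convex_face_at P(1)] assms(1,2) by blast
  have E: "E \<in> M" using assms(6) by (simp add: extreme_point_of_def)
  have "F \<in> M" using F(1) by (simp add: extreme_point_of_def face_at_def)
  have bdd: "bdd_above ((dE M E) ` {F. F extreme_point_of face_at M f})"
    using E assms(3) by (intro dE_extreme_face_bounded(1)[OF assms(1,2)]) auto
  have "LP h - natext M h \<le> (prev F h - prev E h) / norm h"
    using P(2) F(2) assms(5,7) by (simp add: prev_eq_inner)
  also have "\<dots> \<le> dE M E F"
    using assms(3,5,7) E \<open>F \<in> M\<close> by (intro dE_ge) (auto simp: normal_set_def)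
  also have "\<dots> \<le> (SUP F\<in>{F. F extreme_point_of face_at M f}. dE M E F)"
    using F(1) by (intro cSUP_upper[OF _ bdd]) simp
  finally show "LP h - natext M h \<le> (SUP F\<in>{F. F extreme_point_of face_at M f}. dE M E F)" .
qed

lemma coherent_extension_previsions:
  assumes "coherent_on UNIV LP" "\<forall>f\<in>K. LP f = LPK f"
  obtains C where "C \<subseteq> credal K LPK" "C \<noteq> {}"
    "\<And>f. \<exists>p\<in>C. prev p f = LP f" "\<And>f p. p \<in> C \<Longrightarrow> LP f \<le> prev p f"
proof -
  obtain C where C: "C \<noteq> {}" "\<forall>p\<in>C. lin_prev p"
    "\<And>f. \<exists>p\<in>C. prev p f = LP f" "\<And>f p. p \<in> C \<Longrightarrow> LP f \<le> prev p f"
    using assms(1) unfolding coherent_on_def by blast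
  moreover have "C \<subseteq> credal K LPK"
    using C(2,4) assms(2) by (auto simp: credal_def) metis
  ultimately show thesis using that by blast
qed

lemma face_at_credal_memI:
  assumes "p \<in> credal K LPK" "f \<in> K" "prev p f = LPK f"
  shows "p \<in> face_at (credal K LPK) f"
proof -
  have "natext (credal K LPK) f \<le> prev p f"
    using natext_le[OF compact_credal assms(1)] .
  moreover have "LPK f \<le> natext (credal K LPK) f"
    unfolding natext_def using assms(1,2) by (intro cINF_greatest) (auto simp: credal_def)
  ultimately show ?thesis using assms by (simp add: face_at_def)
qed

lemma abs_natext_gap_le_extreme_bound:
  assumes "finite K" "K \<noteq> {}" "coherent_on UNIV LP" "\<forall>f\<in>K. LP f = LPK f" "norm h = 1"
  shows "\<bar>LP h - natext (credal K LPK) h\<bar> \<le> (SUP e\<in>{e. e extreme_point_of credal K LPK}.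
    INF f\<in>K. SUP F\<in>{F. F extreme_point_of face_at (credal K LPK) f}. dE (credal K LPK) e F)"
proof -
  define M where "M = credal K LPK"
  obtain C where C: "C \<subseteq> M" "C \<noteq> {}"
    "\<And>f. \<exists>p\<in>C. prev p f = LP f" "\<And>f p. p \<in> C \<Longrightarrow> LP f \<le> prev p f"
    using coherent_extension_previsions[OF assms(3,4)] unfolding M_def by blast
  then have M: "compact M" "convex M" "M \<noteq> {}" "\<forall>p\<in>M. lin_prev p"
    unfolding M_def by (auto simp: compact_credal convex_credal) (simp add: credal_def)
  obtain E where E: "E extreme_point_of M" "prev E h = natext M h"
    using extreme_point_attains_natext[OF M(1-3)] .
  have lower: "natext M h \<le> LP h"
    using C(3)[of h] C(1) natext_le[OF M(1)] by (metis subsetD)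
  have dominated: "\<exists>P\<in>face_at M f. LP h \<le> prev P h" if "f \<in> K" for f
    using C(3)[of f] C(4) C(1) face_at_credal_memI[OF _ that] assms(4) that
    unfolding M_def by fastforce
  have "LP h - natext M h
      \<le> (INF f\<in>K. SUP F\<in>{F. F extreme_point_of face_at M f}. dE M E F)"
    by (rule lower_prevision_gap_le_dE[where LP = LP, OF M(1,2,4) assms(2,5) E dominated])
  also have "\<dots> \<le> (SUP e\<in>{e. e extreme_point_of M}.
      INF f\<in>K. SUP F\<in>{F. F extreme_point_of face_at M f}. dE M e F)"
    using E(1) assms(1,2) M
    by (intro cSUP_upper bdd_aboveI2[where M=2] INF_SUP_dE_extreme_face_le_2)
      (auto simp: extreme_point_of_def)
  finally show ?thesis using lower unfolding M_def by linarith
qed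

theorem mainTheorem7:
  fixes K :: "(real^'n) set" and LPK :: "real^'n \<Rightarrow> real" and LP :: "real^'n \<Rightarrow> real"
  assumes "finite K" and "K \<noteq> {}" and "coherent_on K LPK"
    and "coherent_on UNIV LP" and "\<forall>f\<in>K. LP f = LPK f"
  shows "dist_lp LP (natext (credal K LPK))
    \<le> (SUP e\<in>{e. e extreme_point_of credal K LPK}.
          INF f\<in>K. SUP F\<in>{F. F extreme_point_of face_at (credal K LPK) f}.
             dE (credal K LPK) e F)"
proof -
  have "{h::real^'n. norm h = 1} \<noteq> {}"
    using norm_axis_1 by blast
  then show ?thesis
    unfolding dist_lp_def
    using abs_natext_gap_le_extreme_bound[OF assms(1,2,4,5)] by (intro cSUP_least) auto
qed

end
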